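(* Let $G=(V,E)$ be an atomic bispanning graph, $v\in V$ of degree $3$ with neighbours $x,y,z$ and incident edges $e_x,e_y,e_z$, let $(a,b)\in\{(x,y),(x,z),(y,z)\}$, $c$ the remaining neighbour, and $G_{a,b}$ the reduction graph. Let $(e,f,S,T)$ be an arc of $\vec\tau_3(G_{a,b})$ with $e\neq e_{a,b}$ and $f\neq e_{a,b}$. If (1) $e_{a,b}\in S$ and $e\notin D_{G_{a,b}}(S,e_{a,b})\cap C_G(T+e_c,e_a)\cap C_G(T+e_c,e_b)$, or (2) $e_{a,b}\in T$ and $e\notin D_{G_{a,b}}(T,e_{a,b})\cap C_G(S+e_c,e_a)\cap C_G(S+e_c,e_b)$, then $(e,f,\rho_{e_{a,b},c}(S,T))$ is an arc of $\vec\tau_3(G)$. Conversely, for all $(S,T)\in V_{\tau(G_{a,b})}$ and all edges $e,f\neq e_{a,b}$: if $(e,f,S,T)$ is not an arc of $\vec\tau_3(G_{a,b})$, or if it is an arc but neither condition (1) nor condition (2) holds, then $(e,f,\rho_{e_{a,b},c}(S,T))$ is not an arc of $\vec\tau_3(G)$.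
   Context: Graphs are finite, undirected, possibly with parallel edges, no loops; $X+a=X\cup\{a\}$, $X-a=X\setminus\{a\}$. A spanning tree is $T\subseteq E$ with $(V,T)$ connected and acyclic; bispanning means $E$ is the union of two disjoint spanning trees; atomic means the only bispanning subgraphs are the graph itself and single vertices. For a spanning tree $T$ of a graph $H$ and $e\notin T$, $C_H(T,e)$ is the edge set of the unique cycle in $T+e$; for $e\in T$, $D_H(T,e)$ is the set of edges of $H$ with one end in each component of $(V(H),T-e)$. For disjoint spanning trees $S,T$ covering all edges of $H$: $(e,f)$ with $e\in S,f\in T$ and $D_H(S,e)\cap C_H(T,e)=\{e,f\}$ is a unique $S$ edge exchange; $(e,f)$ with $e\in T,f\in S$ and $D_H(T,e)\cap C_H(S,e)=\{e,f\}$ is a unique $T$ edge exchange. $\vec\tau_3(H)$: vertex set $V_{\tau(H)}$ of ordered pairs $(S,T)$ of disjoint spanning trees covering all edges; an arc $(e,f,S,T)$ from $(S,T)$ to $(S-e+f,T+e-f)$ for each unique $S$ edge exchange and to $(S+e-f,T-e+f)$ for each unique $T$ edge exchange; $(e,f,P)$ with $P=(S,T)$ denotes $(e,f,S,T)$. The edge $e_w$ joins $v$ and $w$. The reduction graph $G_{a,b}$ has vertex set $V-v$ and edge set $E-e_x-e_y-e_z+e_{a,b}$ with $e_{a,b}$ a new edge with ends $a,b$. $\rho_{e_{a,b},c}(S,T)=(S-e_{a,b}+e_a+e_b,T+e_c)$ if $e_{a,b}\in S$ and $=(S+e_c,T-e_{a,b}+e_a+e_b)$ if $e_{a,b}\in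 T$. *)

theory Defs
  imports Main
begin

text \<open>A finite multigraph is given by a vertex set V, an edge set E and a function
  ends assigning to every edge its set of two distinct end vertices (parallel edges
  allowed, no loops).\<close>

definition graph :: "'v set \<Rightarrow> 'e set \<Rightarrow> ('e \<Rightarrow> 'v set) \<Rightarrow> bool" where
  "graph V E ends \<longleftrightarrow> finite V \<and> V \<noteq> {} \<and> finite E \<and>
     (\<forall>g\<in>E. ends g \<subseteq> V \<and> card (ends g) = 2)"

definition adj :: "('e \<Rightarrow> 'v set) \<Rightarrow> 'e set \<Rightarrow> ('v \<times> 'v) set" where
  "adj ends F = {(p, q). \<exists>g\<in>F. ends g = {p, q}}"

definition conn :: "('e \<Rightarrow> 'v set) \<Rightarrow> 'e set \<Rightarrow> 'v \<Rightarrow> 'v \<Rightarrow> bool" where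
  "conn ends F p q \<longleftrightarrow> (p, q) \<in> (adj ends F)\<^sup>*"

definition is_cycle :: "('e \<Rightarrow> 'v set) \<Rightarrow> 'e set \<Rightarrow> bool" where
  "is_cycle ends C \<longleftrightarrow> C \<noteq> {} \<and> finite C \<and>
     (\<forall>u\<in>\<Union>(ends ` C). card {g\<in>C. u \<in> ends g} = 2) \<and>
     (\<forall>p\<in>\<Union>(ends ` C). \<forall>q\<in>\<Union>(ends ` C). conn ends C p q)"

definition spanning_tree :: "'v set \<Rightarrow> 'e set \<Rightarrow> ('e \<Rightarrow> 'v set) \<Rightarrow> 'e set \<Rightarrow> bool" where
  "spanning_tree V E ends T \<longleftrightarrow> T \<subseteq> E \<and>
     (\<forall>p\<in>V. \<forall>q\<in>V. conn ends T p q) \<and>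
     \<not> (\<exists>C\<subseteq>T. is_cycle ends C)"

definition bispanning :: "'v set \<Rightarrow> 'e set \<Rightarrow> ('e \<Rightarrow> 'v set) \<Rightarrow> bool" where
  "bispanning V E ends \<longleftrightarrow> (\<exists>S T. spanning_tree V E ends S \<and> spanning_tree V E ends T \<and>
     S \<inter> T = {} \<and> S \<union> T = E)"

definition subgraph :: "'v set \<Rightarrow> 'e set \<Rightarrow> 'v set \<Rightarrow> 'e set \<Rightarrow> ('e \<Rightarrow> 'v set) \<Rightarrow> bool" where
  "subgraph V' E' V E ends \<longleftrightarrow> V' \<subseteq> V \<and> E' \<subseteq> E \<and> (\<forall>g\<in>E'. ends g \<subseteq> V')"

definition atomic :: "'v set \<Rightarrow> 'e set \<Rightarrow> ('e \<Rightarrow> 'v set) \<Rightarrow> bool" where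
  "atomic V E ends \<longleftrightarrow> (\<forall>V' E'. V' \<noteq> {} \<and> subgraph V' E' V E ends \<and> bispanning V' E' ends \<longrightarrow>
      (V' = V \<and> E' = E) \<or> (\<exists>x. V' = {x}))"

text \<open>C_H(T,e): edge set of the unique cycle in T + e\<close>
definition fcycle :: "('e \<Rightarrow> 'v set) \<Rightarrow> 'e set \<Rightarrow> 'e \<Rightarrow> 'e set" where
  "fcycle ends T e = (THE C. C \<subseteq> insert e T \<and> is_cycle ends C)"

text \<open>D_H(T,e): edges of H with one end in each component of (V(H), T - e), i.e. one end
  in the component of one end of e and the other end in the component of the other end of e.\<close>
definition fcut :: "'e set \<Rightarrow> ('e \<Rightarrow> 'v set) \<Rightarrow> 'e set \<Rightarrow> 'e \<Rightarrow> 'e set" where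
  "fcut E ends T e = {g\<in>E. \<exists>p q u w. ends g = {p, q} \<and> ends e = {u, w} \<and>
       conn ends (T - {e}) u p \<and> conn ends (T - {e}) w q}"

definition tau_vertices :: "'v set \<Rightarrow> 'e set \<Rightarrow> ('e \<Rightarrow> 'v set) \<Rightarrow> ('e set \<times> 'e set) set" where
  "tau_vertices V E ends = {(S, T). spanning_tree V E ends S \<and> spanning_tree V E ends T \<and>
       S \<inter> T = {} \<and> S \<union> T = E}"

definition tau3_arc :: "'v set \<Rightarrow> 'e set \<Rightarrow> ('e \<Rightarrow> 'v set) \<Rightarrow> 'e \<Rightarrow> 'e \<Rightarrow> 'e set \<Rightarrow> 'e set \<Rightarrow> bool" where
  "tau3_arc V E ends e f S T \<longleftrightarrow> (S, T) \<in> tau_vertices V E ends \<and>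
     ((e \<in> S \<and> f \<in> T \<and> fcut E ends S e \<inter> fcycle ends T e = {e, f}) \<or>
      (e \<in> T \<and> f \<in> S \<and> fcut E ends T e \<inter> fcycle ends S e = {e, f}))"

definition rho :: "'e \<Rightarrow> 'e \<Rightarrow> 'e \<Rightarrow> 'e \<Rightarrow> 'e set \<times> 'e set \<Rightarrow> 'e set \<times> 'e set" where
  "rho eab ea eb ec P = (if eab \<in> fst P
      then (fst P - {eab} \<union> {ea, eb}, insert ec (snd P))
      else (insert ec (fst P), snd P - {eab} \<union> {ea, eb}))"

end

theory Submission
  imports Defs
begin

text \<open>The lift rho replaces eab, in the tree containing it, by the path ea, eb through v, and
  attaches v to the other tree as a leaf by ec. Deleting an edge of the reduced graph separates the
  same vertices before and after the lift (contract the path a - v - b, or drop the leaf v), so both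
  trees stay spanning and the fundamental cuts and cycles of the old edges correspond. The only change
  is that the single edge eab of the reduced tree becomes the two edges ea and eb: for an edge e of
  the other tree, eab is a competitor of f exactly when e lies in the cut of eab and separates a from
  b, while ea resp. eb is one exactly when e lies in the cut of eab and separates c from a resp. b.
  As connectivity in T - e is an equivalence relation on a, b, c, an arc of the reduced graph lifts
  unless e lies in the cut of eab and T - e separates c from both a and b.\<close>

lemma conn_refl [simp]: "conn ends F p p"
  by (simp add: conn_def)

lemma conn_edge: "g \<in> F \<Longrightarrow> ends g = {p,q} \<Longrightarrow> conn ends F p q"
  unfolding conn_def adj_def by (rule r_into_rtrancl) blast

lemma conn_sym: "conn ends F p q \<Longrightarrow> conn ends F q p"
  unfolding conn_def
proof (induction rule: rtrancl_induct)
  case (step q r)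
  then have "(r,q) \<in> adj ends F" by (auto simp: adj_def insert_commute)
  then show ?case using step.IH by (rule converse_rtrancl_into_rtrancl)
qed simp

lemma conn_doubleton_iff: "{p,q} = {r,s} \<Longrightarrow> conn ends F p q \<longleftrightarrow> conn ends F r s"
  by (metis conn_sym doubleton_eq_iff)

lemma conn_trans: "conn ends F p q \<Longrightarrow> conn ends F q r \<Longrightarrow> conn ends F p r"
  unfolding conn_def by (rule rtrancl_trans)

lemma conn_mono: "F \<subseteq> F' \<Longrightarrow> conn ends F p q \<Longrightarrow> conn ends F' p q"
  unfolding conn_def adj_def by (erule rtrancl_mono[THEN subsetD, rotated]) blast

lemma conn_image:
  assumes edge: "\<And>g r s. g \<in> F \<Longrightarrow> ends g = {r,s} \<Longrightarrow> conn ends' F' (m r) (m s)"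
    and "conn ends F p q"
  shows "conn ends' F' (m p) (m q)"
  using \<open>conn ends F p q\<close> unfolding conn_def
proof (induction rule: rtrancl_induct)
  case (step q r)
  then obtain g where "g \<in> F" "ends g = {q,r}" by (auto simp: adj_def)
  then have "conn ends' F' (m q) (m r)" by (rule edge)
  then show ?case using step.IH unfolding conn_def by (rule rtrancl_trans[rotated])
qed simp

lemma conn_fun_upd_notin:
  assumes "g \<notin> F"
  shows "conn (ends(g := X)) F = conn ends F"
proof -
  have "adj (ends(g := X)) F = adj ends F"
    unfolding adj_def using assms by (metis fun_upd_other)
  then show ?thesis by (simp add: conn_def[abs_def])
qed

lemma conn_empty: "conn ends {} p q \<Longrightarrow> p = q"
  by (simp add: conn_def adj_def)

lemma conn_from_isolated:
  assumes "\<forall>h\<in>F. v \<notin> ends h" and "conn ends F v q"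
  shows "q = v"
  using \<open>conn ends F v q\<close> unfolding conn_def
proof (induction rule: rtrancl_induct)
  case (step q r)
  then obtain g where "g \<in> F" "ends g = {q,r}" by (auto simp: adj_def)
  then show ?case using assms(1) step by auto
qed simp

subsection \<open>Walks and cycles\<close>

fun walk :: "('e \<Rightarrow> 'v set) \<Rightarrow> 'e set \<Rightarrow> 'v list \<Rightarrow> 'e list \<Rightarrow> bool" where
  "walk ends F [p] [] = True"
| "walk ends F (p#q#ps) (g#gs) = (g \<in> F \<and> ends g = {p,q} \<and> walk ends F (q#ps) gs)"
| "walk ends F _ _ = False"

lemma walk_length: "walk ends F ps gs \<Longrightarrow> length ps = Suc (length gs)"
  by (induction ends F ps gs rule: walk.induct) auto

lemma walk_drop: "walk ends F ps gs \<Longrightarrow> i < length ps \<Longrightarrow> walk ends F (drop i ps) (drop i gs)"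
proof (induction ends F ps gs arbitrary: i rule: walk.induct)
  case (2 ends F p q ps g gs)
  then show ?case by (cases i) auto
qed auto

lemma walk_edges_subset: "walk ends F ps gs \<Longrightarrow> set gs \<subseteq> F"
  by (induction ends F ps gs rule: walk.induct) auto

lemma walk_ends_subset: "walk ends F ps gs \<Longrightarrow> \<Union>(ends ` set gs) \<subseteq> set ps"
  by (induction ends F ps gs rule: walk.induct) auto

lemma walk_conn: "walk ends F ps gs \<Longrightarrow> z \<in> set ps \<Longrightarrow> conn ends (set gs) (hd ps) z"
proof (induction ends F ps gs arbitrary: z rule: walk.induct)
  case (2 ends F p q ps g gs)
  have pq: "conn ends (set (g#gs)) p q" by (rule conn_edge[of g]) (use 2 in auto)
  show ?case
  proof (cases "z = p")
    case False
    then have "conn ends (set gs) q z" using 2 by auto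
    then have "conn ends (set (g#gs)) q z" by (rule conn_mono[rotated]) auto
    then show ?thesis using pq by (auto intro: conn_trans)
  qed simp
qed auto

lemma path_exists:
  assumes "conn ends F u w"
  shows "\<exists>ps gs. walk ends F ps gs \<and> hd ps = u \<and> last ps = w \<and> distinct ps"
  using assms unfolding conn_def
proof (induction rule: converse_rtrancl_induct)
  case base
  show ?case by (rule exI[of _ "[w]"], rule exI[of _ "[]"]) simp
next
  case (step u u')
  then obtain ps gs where w: "walk ends F ps gs" "hd ps = u'" "last ps = w" "distinct ps" by blast
  obtain g where g: "g \<in> F" "ends g = {u,u'}" using step(1) by (auto simp: adj_def)
  have "ps \<noteq> []" using walk_length[OF w(1)] by auto
  show ?case
  proof (cases "u \<in> set ps")
    case True
    then obtain i where i: "i < length ps" "ps ! i = u" by (auto simp: in_set_conv_nth)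
    show ?thesis
      apply (rule exI[of _ "drop i ps"], rule exI[of _ "drop i gs"])
      using walk_drop[OF w(1) i(1)] i w(3,4) by (auto simp: hd_drop_conv_nth last_drop)
  next
    case False
    then obtain rest where "ps = u' # rest" using \<open>ps \<noteq> []\<close> w(2) by (cases ps) auto
    then show ?thesis
      by (intro exI[of _ "u # ps"] exI[of _ "g # gs"]) (use w g False in auto)
  qed
qed

lemma card_incident_insert:
  "g \<notin> F \<Longrightarrow> finite F \<Longrightarrow>
   card {h\<in>insert g F. z \<in> ends h} = (if z \<in> ends g then 1 else 0) + card {h\<in>F. z \<in> ends h}"
proof -
  assume "g \<notin> F" "finite F"
  have "{h\<in>insert g F. z \<in> ends h} = (if z \<in> ends g then insert g {h\<in>F. z \<in> ends h} else {h\<in>F. z \<in> ends h})"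
    by auto
  then show ?thesis using \<open>g \<notin> F\<close> \<open>finite F\<close> by simp
qed

lemma card_filter_eq_sum: "finite C \<Longrightarrow> card {h\<in>C. P h} = (\<Sum>h\<in>C. if P h then 1 else 0)"
  using sum.inter_filter[of C "\<lambda>_. 1::nat" P] by simp

lemma path_degree:
  "walk ends F ps gs \<Longrightarrow> distinct ps \<Longrightarrow> 2 \<le> length ps \<Longrightarrow>
   card {h\<in>set gs. z \<in> ends h} = (if z = hd ps \<or> z = last ps then 1 else if z \<in> set ps then 2 else 0)"
proof (induction ends F ps gs rule: walk.induct)
  case (2 ends F p q ps g gs)
  have w: "walk ends F (q#ps) gs" and g: "ends g = {p,q}" using 2 by auto
  show ?case
  proof (cases ps)
    case Nil
    then have "gs = []" using walk_length[OF w] by simp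
    then show ?thesis using g Nil 2(3) by (auto simp: Collect_conv_if)
  next
    case (Cons r rs)
    have IH: "card {h\<in>set gs. z \<in> ends h} =
        (if z = q \<or> z = last (q#ps) then 1 else if z \<in> set (q#ps) then 2 else 0)"
      using 2 Cons by auto
    have p: "p \<notin> set (q#ps)" using 2(3) by auto
    then have "g \<notin> set gs" using walk_ends_subset[OF w] g by auto
    then have "card {h\<in>set (g#gs). z \<in> ends h} = (if z \<in> ends g then 1 else 0) + card {h\<in>set gs. z \<in> ends h}"
      using card_incident_insert[of g "set gs" z ends] by simp
    moreover have "last (q#ps) \<noteq> q" using 2(3) Cons by (auto simp: last_in_set)
    ultimately show ?thesis using IH g p Cons by auto
  qed
qed auto

lemma cycle_through_edge:
  assumes g: "g \<notin> F" "ends g = {u,w}" "u \<noteq> w" and "conn ends F u w"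
  shows "\<exists>C\<subseteq>insert g F. is_cycle ends C \<and> g \<in> C"
proof -
  obtain ps gs where w: "walk ends F ps gs" "hd ps = u" "last ps = w" "distinct ps"
    using path_exists[OF \<open>conn ends F u w\<close>] by blast
  have "ps \<noteq> []" using walk_length[OF w(1)] by auto
  have long: "2 \<le> length ps"
  proof (rule ccontr)
    assume "\<not> 2 \<le> length ps"
    then have "hd ps = last ps" using \<open>ps \<noteq> []\<close> by (cases ps) (auto simp: Suc_le_eq)
    then show False using w g by auto
  qed
  let ?C = "insert g (set gs)"
  have "g \<notin> set gs" using walk_edges_subset[OF w(1)] g by auto
  have verts: "\<Union>(ends ` ?C) \<subseteq> set ps"
    using walk_ends_subset[OF w(1)] g w \<open>ps \<noteq> []\<close> by (auto simp: hd_in_set last_in_set)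
  have "is_cycle ends ?C"
    unfolding is_cycle_def
  proof (intro conjI ballI)
    fix z assume "z \<in> \<Union>(ends ` ?C)"
    then have "z \<in> set ps" using verts by auto
    moreover have "card {h \<in> ?C. z \<in> ends h} = (if z \<in> ends g then 1 else 0) + card {h\<in>set gs. z \<in> ends h}"
      using card_incident_insert[of g "set gs" z ends] \<open>g \<notin> set gs\<close> by simp
    ultimately show "card {h \<in> ?C. z \<in> ends h} = 2"
      using path_degree[OF w(1) w(4) long, of z] g w by auto
  next
    fix p q assume "p \<in> \<Union>(ends ` ?C)" "q \<in> \<Union>(ends ` ?C)"
    then have "conn ends (set gs) u p" "conn ends (set gs) u q"
      using verts walk_conn[OF w(1)] w(2) by auto
    then have "conn ends (set gs) p q" by (meson conn_sym conn_trans)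
    then show "conn ends ?C p q" by (rule conn_mono[rotated]) auto
  qed auto
  then show ?thesis using walk_edges_subset[OF w(1)] by blast
qed

text \<open>Parity: if deleting g disconnected its ends p and q, the vertices of C reachable from p would
  have even degree sum, while exactly one edge end of g, namely p, lies among them.\<close>
lemma cycle_minus_edge_conn:
  assumes cyc: "is_cycle ends C" and two: "\<forall>h\<in>C. card (ends h) = 2"
    and g: "g \<in> C" "ends g = {p,q}"
  shows "conn ends (C - {g}) p q"
proof (rule ccontr)
  assume nc: "\<not> ?thesis"
  define K where "K = \<Union>(ends ` C) \<inter> {z. conn ends (C - {g}) p z}"
  have "finite C" using cyc by (simp add: is_cycle_def)
  moreover have "\<forall>h\<in>C. finite (ends h)" using two by (auto intro: card_ge_0_finite)
  ultimately have "finite K" unfolding K_def by simp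
  have "(\<Sum>z\<in>K. card {h\<in>C. z\<in>ends h}) = (\<Sum>z\<in>K. 2)"
    using cyc by (intro sum.cong) (auto simp: is_cycle_def K_def)
  moreover have "(\<Sum>z\<in>K. card {h\<in>C. z\<in>ends h}) = (\<Sum>h\<in>C. card {z\<in>K. z\<in>ends h})"
    using \<open>finite K\<close> \<open>finite C\<close> by (simp add: card_filter_eq_sum) (rule sum.swap)
  ultimately have even_sum: "even (\<Sum>h\<in>C. card {z\<in>K. z\<in>ends h})" by simp
  have "even (card {z\<in>K. z\<in>ends h})" if "h \<in> C - {g}" for h
  proof -
    have "card (ends h) = 2" using two that by auto
    then obtain r s where rs: "ends h = {r,s}" "r \<noteq> s" by (auto simp: card_2_iff)
    have "conn ends (C - {g}) r s" using that rs by (intro conn_edge) auto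
    then have "r \<in> K \<longleftrightarrow> s \<in> K" using that rs unfolding K_def by (auto intro: conn_sym conn_trans)
    then have "{z\<in>K. z\<in>ends h} = (if r \<in> K then {r,s} else {})" using rs by auto
    then show ?thesis using rs by auto
  qed
  then have "even (\<Sum>h\<in>C-{g}. card {z\<in>K. z\<in>ends h})" by (intro dvd_sum) auto
  moreover have "{z\<in>K. z\<in>ends g} = {p}" using g nc by (auto simp: K_def)
  ultimately have "odd (\<Sum>h\<in>C. card {z\<in>K. z\<in>ends h})"
    using \<open>finite C\<close> g by (simp add: sum.remove)
  then show False using even_sum by simp
qed

subsection \<open>Fundamental cycles and cuts\<close>

definition disconnects :: "('e \<Rightarrow> 'v set) \<Rightarrow> 'e set \<Rightarrow> 'e \<Rightarrow> 'e \<Rightarrow> bool" where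
  "disconnects ends F g h \<longleftrightarrow> (\<exists>p q. ends h = {p,q} \<and> \<not> conn ends (F - {g}) p q)"

lemma disconnects_iff:
  assumes "ends h = {p,q}"
  shows "disconnects ends F g h \<longleftrightarrow> \<not> conn ends (F - {g}) p q"
  using assms by (metis disconnects_def conn_doubleton_iff)

lemma acyclicI:
  assumes two: "\<forall>h\<in>F. card (ends h) = 2"
    and bridges: "\<And>g p q. g \<in> F \<Longrightarrow> ends g = {p,q} \<Longrightarrow> \<not> conn ends (F - {g}) p q"
  shows "\<not> (\<exists>C\<subseteq>F. is_cycle ends C)"
proof
  assume "\<exists>C\<subseteq>F. is_cycle ends C"
  then obtain C g where C: "C \<subseteq> F" "is_cycle ends C" and "g \<in> C" by (auto simp: is_cycle_def)
  then have "card (ends g) = 2" using two by auto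
  then obtain p q where pq: "ends g = {p,q}" by (auto simp: card_2_iff)
  have "conn ends (C - {g}) p q"
    by (rule cycle_minus_edge_conn[OF C(2) _ \<open>g \<in> C\<close> pq]) (use two C in auto)
  then have "conn ends (F - {g}) p q" by (rule conn_mono[rotated]) (use C in auto)
  then show False using bridges[of g p q] \<open>g \<in> C\<close> C pq by auto
qed

lemma spanning_treeI:
  assumes "T \<subseteq> E" and two: "\<forall>h\<in>T. card (ends h) = 2" and root: "\<And>p. p \<in> V \<Longrightarrow> conn ends T r p"
    and "\<And>g p q. g \<in> T \<Longrightarrow> ends g = {p,q} \<Longrightarrow> \<not> conn ends (T - {g}) p q"
  shows "spanning_tree V E ends T"
  unfolding spanning_tree_def
proof (intro conjI)
  show "\<forall>p\<in>V. \<forall>q\<in>V. conn ends T p q" using root by (blast intro: conn_sym conn_trans)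
  show "\<not> (\<exists>C\<subseteq>T. is_cycle ends C)" using two assms(4) by (rule acyclicI)
qed (rule assms(1))

lemma acyclic_edge_bridge:
  assumes "\<not> (\<exists>C\<subseteq>T. is_cycle ends C)" and g: "g \<in> T" "ends g = {u,w}" "u \<noteq> w"
  shows "\<not> conn ends (T - {g}) u w"
proof
  assume "conn ends (T - {g}) u w"
  from cycle_through_edge[of g "T - {g}", OF _ g(2,3) this] obtain C where
    "C \<subseteq> insert g (T - {g})" "is_cycle ends C" by auto
  then show False using assms g by auto
qed

lemma spanning_tree_bridge:
  "spanning_tree V E ends T \<Longrightarrow> g \<in> T \<Longrightarrow> ends g = {u,w} \<Longrightarrow> u \<noteq> w \<Longrightarrow> \<not> conn ends (T - {g}) u w"
  unfolding spanning_tree_def by (blast dest: acyclic_edge_bridge)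

lemma conn_minus_edge_from_ends:
  assumes "conn ends T u p" and g: "g \<in> T" "ends g = {u,w}"
  shows "conn ends (T - {g}) u p \<or> conn ends (T - {g}) w p"
  using assms(1) unfolding conn_def
proof (induction rule: rtrancl_induct)
  case (step p p')
  then obtain h where h: "h \<in> T" "ends h = {p,p'}" by (auto simp: adj_def)
  show ?case
  proof (cases "h = g")
    case True
    then have "p' = u \<or> p' = w" using h g by (auto simp: doubleton_eq_iff)
    then show ?thesis by (auto simp: conn_def)
  next
    case False
    then have "(p,p') \<in> adj ends (T - {g})" using h by (auto simp: adj_def)
    then show ?thesis using step.IH by (blast intro: rtrancl_into_rtrancl)
  qed
qed simp

lemma fcut_iff_disconnects:
  assumes sp: "spanning_tree V E ends T" and wf: "\<forall>h\<in>E. ends h \<subseteq> V \<and> card (ends h) = 2"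
    and "e \<in> T" "g \<in> E"
  shows "g \<in> fcut E ends T e \<longleftrightarrow> disconnects ends T e g"
proof -
  have "T \<subseteq> E" and con: "\<forall>p\<in>V. \<forall>q\<in>V. conn ends T p q"
    using sp by (auto simp: spanning_tree_def)
  obtain u w where e: "ends e = {u,w}" "u \<noteq> w"
    using wf \<open>e \<in> T\<close> \<open>T \<subseteq> E\<close> by (force simp: card_2_iff)
  obtain p q where g: "ends g = {p,q}"
    using wf \<open>g \<in> E\<close> by (force simp: card_2_iff)
  have V: "u\<in>V" "w\<in>V" "p\<in>V" "q\<in>V" using wf \<open>e \<in> T\<close> \<open>T \<subseteq> E\<close> \<open>g \<in> E\<close> e g by auto
  let ?c = "conn ends (T - {e})"
  have fcut: "g \<in> fcut E ends T e \<longleftrightarrow> (?c u p \<and> ?c w q) \<or> (?c w p \<and> ?c u q)"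
    using \<open>g \<in> E\<close> by (auto simp: fcut_def e g doubleton_eq_iff)
  have "\<not> ?c u w" using spanning_tree_bridge[OF sp \<open>e \<in> T\<close> e] .
  have "?c u p \<or> ?c w p" "?c u q \<or> ?c w q"
    using conn_minus_edge_from_ends[of ends T u _ e w] con V \<open>e \<in> T\<close> e by auto
  then have "g \<in> fcut E ends T e \<longleftrightarrow> \<not> ?c p q"
    unfolding fcut using \<open>\<not> ?c u w\<close> by (meson conn_sym conn_trans)
  then show ?thesis using disconnects_iff[of ends g p q] g by simp
qed

lemma conn_insert_redundant_edge:
  assumes e: "ends e = {u,w}" and "conn ends F u w" and "conn ends (insert e F) p q"
  shows "conn ends F p q"
proof -
  have "conn ends F (id p) (id q)"
  proof (rule conn_image[OF _ assms(3)])
    fix g r s assume "g \<in> insert e F" "ends g = {r,s}"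
    then show "conn ends F (id r) (id s)"
      using e \<open>conn ends F u w\<close> by (cases "g = e") (auto simp: doubleton_eq_iff intro: conn_sym conn_edge)
  qed
  then show ?thesis by simp
qed

lemma cycle_in_tree_plus_edge:
  assumes sp: "spanning_tree V E ends T" and wf: "\<forall>h\<in>E. ends h \<subseteq> V \<and> card (ends h) = 2"
    and "e \<in> E" "e \<notin> T" and C: "C \<subseteq> insert e T" "is_cycle ends C"
  shows "C = insert e {g\<in>T. disconnects ends T g e}"
proof -
  have "T \<subseteq> E" and ac: "\<not>(\<exists>C\<subseteq>T. is_cycle ends C)" using sp by (auto simp: spanning_tree_def)
  obtain u w where e: "ends e = {u,w}" using wf \<open>e \<in> E\<close> by (force simp: card_2_iff)
  have two: "\<forall>h\<in>C. card (ends h) = 2" using C \<open>T \<subseteq> E\<close> \<open>e \<in> E\<close> wf by auto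
  have "e \<in> C" using C ac by blast
  have "h \<in> C \<longleftrightarrow> \<not> conn ends (T - {h}) u w" if "h \<in> T" for h
  proof
    assume "h \<in> C"
    obtain r s where rs: "ends h = {r,s}" "r \<noteq> s" using two \<open>h \<in> C\<close> by (force simp: card_2_iff)
    have "conn ends (C - {h}) r s" using cycle_minus_edge_conn[OF C(2) two \<open>h \<in> C\<close> rs(1)] .
    then have "conn ends (insert e (T - {h})) r s" by (rule conn_mono[rotated]) (use C in auto)
    moreover have "\<not> conn ends (T - {h}) r s" using acyclic_edge_bridge[OF ac \<open>h \<in> T\<close> rs] .
    ultimately show "\<not> conn ends (T - {h}) u w" using conn_insert_redundant_edge[of ends e u w] e by blast
  next
    assume "\<not> conn ends (T - {h}) u w"
    moreover have "conn ends (C - {e}) u w" using cycle_minus_edge_conn[OF C(2) two \<open>e \<in> C\<close> e] .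
    ultimately show "h \<in> C" using C by (blast intro: conn_mono[rotated])
  qed
  then show ?thesis using C \<open>e \<in> C\<close> \<open>e \<notin> T\<close> disconnects_iff[of ends e u w] e by blast
qed

lemma fcycle_eq:
  assumes sp: "spanning_tree V E ends T" and wf: "\<forall>h\<in>E. ends h \<subseteq> V \<and> card (ends h) = 2"
    and "e \<in> E" "e \<notin> T"
  shows "fcycle ends T e = insert e {g\<in>T. disconnects ends T g e}"
proof -
  obtain u w where e: "ends e = {u,w}" "u \<noteq> w" using wf \<open>e \<in> E\<close> by (force simp: card_2_iff)
  moreover have "conn ends T u w" using sp wf \<open>e \<in> E\<close> e by (auto simp: spanning_tree_def)
  ultimately obtain C where "C \<subseteq> insert e T" "is_cycle ends C"
    using cycle_through_edge[of e T ends u w] \<open>e \<notin> T\<close> by blast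
  then have C: "C \<subseteq> insert e T \<and> is_cycle ends C" "C = insert e {g\<in>T. disconnects ends T g e}"
    using cycle_in_tree_plus_edge[OF assms] by auto
  show ?thesis unfolding fcycle_def
    by (rule the_equality) (use C cycle_in_tree_plus_edge[OF assms] in auto)
qed

lemma unique_exchange_iff:
  assumes tv: "(S, T) \<in> tau_vertices V E ends" and wf: "\<forall>h\<in>E. ends h \<subseteq> V \<and> card (ends h) = 2"
    and "e \<in> S" "f \<in> T"
  shows "fcut E ends S e \<inter> fcycle ends T e = {e,f} \<longleftrightarrow>
    {g\<in>T. disconnects ends S e g \<and> disconnects ends T g e} = {f}"
proof -
  have S: "spanning_tree V E ends S" and T: "spanning_tree V E ends T" and "S \<inter> T = {}" "S \<union> T = E"
    using tv by (auto simp: tau_vertices_def)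
  then have "e \<in> E" "e \<notin> T" "e \<noteq> f" using \<open>e \<in> S\<close> \<open>f \<in> T\<close> by auto
  obtain u w where e: "ends e = {u,w}" "u \<noteq> w" using wf \<open>e \<in> E\<close> by (force simp: card_2_iff)
  have "disconnects ends S e e"
    using spanning_tree_bridge[OF S \<open>e \<in> S\<close> e] disconnects_iff[of ends e u w S e] e by simp
  moreover have "g \<in> fcut E ends S e \<longleftrightarrow> g \<in> E \<and> disconnects ends S e g" for g
    using fcut_iff_disconnects[OF S wf \<open>e \<in> S\<close>, of g] by (auto simp: fcut_def)
  ultimately have "fcut E ends S e \<inter> fcycle ends T e =
      insert e {g\<in>T. disconnects ends S e g \<and> disconnects ends T g e}"
    using fcycle_eq[OF T wf \<open>e \<in> E\<close> \<open>e \<notin> T\<close>] \<open>S \<union> T = E\<close> \<open>e \<in> E\<close> by auto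
  then show ?thesis using \<open>e \<notin> T\<close> \<open>e \<noteq> f\<close> by auto
qed

lemma tau3_arc_iff:
  assumes tv: "(S, T) \<in> tau_vertices V E ends" and wf: "\<forall>h\<in>E. ends h \<subseteq> V \<and> card (ends h) = 2"
  shows "tau3_arc V E ends e f S T \<longleftrightarrow>
    (e\<in>S \<and> f\<in>T \<and> {g\<in>T. disconnects ends S e g \<and> disconnects ends T g e} = {f}) \<or>
    (e\<in>T \<and> f\<in>S \<and> {g\<in>S. disconnects ends T e g \<and> disconnects ends S g e} = {f})"
proof -
  have "(T, S) \<in> tau_vertices V E ends" using tv by (auto simp: tau_vertices_def)
  then show ?thesis unfolding tau3_arc_def
    using tv unique_exchange_iff[OF tv wf, of e f] unique_exchange_iff[of T S, OF _ wf, of e f] by blast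
qed

lemma tau3_arc_swap: "tau3_arc V E ends e f S T = tau3_arc V E ends e f T S"
  by (auto simp: tau3_arc_def tau_vertices_def)

subsection \<open>Connectivity across the reduction\<close>

lemma conn_contract_iff:
  assumes F: "\<forall>h\<in>F. v \<notin> ends h" "eab \<notin> F"
    and ea: "ends ea = {v,a}" and eb: "ends eb = {v,b}"
    and "v \<noteq> a" "v \<noteq> b" "p \<noteq> v" "q \<noteq> v"
  shows "conn ends (F \<union> {ea,eb}) p q \<longleftrightarrow> conn (ends(eab := {a,b})) (insert eab F) p q"
proof
  let ?m = "\<lambda>z. if z = v then a else z"
  have ab: "conn (ends(eab := {a,b})) (insert eab F) a b" by (rule conn_edge[of eab]) auto
  assume "conn ends (F \<union> {ea,eb}) p q"
  then have "conn (ends(eab := {a,b})) (insert eab F) (?m p) (?m q)"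
  proof (rule conn_image[rotated])
    fix g r s assume g: "g \<in> F \<union> {ea,eb}" "ends g = {r,s}"
    consider "g \<in> F" | "g = ea" | "g = eb" using g by auto
    then show "conn (ends(eab := {a,b})) (insert eab F) (?m r) (?m s)"
    proof cases
      case 1
      then have "r \<noteq> v" "s \<noteq> v" "(ends(eab := {a,b})) g = {r,s}" using F g by auto
      then show ?thesis using 1 by (auto intro: conn_edge)
    next
      case 2
      then have "?m r = a" "?m s = a" using g ea \<open>v \<noteq> a\<close> by (auto simp: doubleton_eq_iff)
      then show ?thesis by simp
    next
      case 3
      then have "(?m r = a \<and> ?m s = b) \<or> (?m r = b \<and> ?m s = a)"
        using g eb \<open>v \<noteq> a\<close> \<open>v \<noteq> b\<close> by (auto simp: doubleton_eq_iff)
      then show ?thesis using ab conn_sym[OF ab] by auto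
    qed
  qed
  then show "conn (ends(eab := {a,b})) (insert eab F) p q" using \<open>p \<noteq> v\<close> \<open>q \<noteq> v\<close> by simp
next
  have "conn ends (F \<union> {ea,eb}) v a" "conn ends (F \<union> {ea,eb}) v b"
    using ea eb by (auto intro: conn_edge)
  then have ab: "conn ends (F \<union> {ea,eb}) a b" by (blast intro: conn_sym conn_trans)
  assume "conn (ends(eab := {a,b})) (insert eab F) p q"
  then have "conn ends (F \<union> {ea,eb}) (id p) (id q)"
  proof (rule conn_image[rotated])
    fix g r s assume g: "g \<in> insert eab F" "(ends(eab := {a,b})) g = {r,s}"
    show "conn ends (F \<union> {ea,eb}) (id r) (id s)"
    proof (cases "g = eab")
      case True
      then show ?thesis using g ab conn_sym[OF ab] by (auto simp: doubleton_eq_iff)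
    next
      case False
      then show ?thesis using g by (auto intro: conn_edge)
    qed
  qed
  then show "conn ends (F \<union> {ea,eb}) p q" by simp
qed

lemma conn_insert_pendant:
  assumes F: "\<forall>h\<in>F. v \<notin> ends h" and ek: "ends ek = {v,k}"
    and "conn ends (insert ek F) p q"
  shows "conn ends F (if p = v then k else p) (if q = v then k else q)"
proof (rule conn_image[OF _ assms(3)])
  fix g r s assume g: "g \<in> insert ek F" "ends g = {r,s}"
  show "conn ends F (if r = v then k else r) (if s = v then k else s)"
  proof (cases "g = ek")
    case True
    then have "(r = v \<and> s = k) \<or> (r = k \<and> s = v)" using g ek by (auto simp: doubleton_eq_iff)
    then show ?thesis by auto
  next
    case False
    then have "g \<in> F" "r \<noteq> v" "s \<noteq> v" using F g by auto
    then show ?thesis using g by (auto intro: conn_edge)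
  qed
qed

lemma conn_insert_pendant_iff:
  assumes "\<forall>h\<in>F. v \<notin> ends h" "ends ek = {v,k}" "p \<noteq> v" "q \<noteq> v"
  shows "conn ends (insert ek F) p q \<longleftrightarrow> conn ends F p q"
  using conn_insert_pendant[OF assms(1,2), of p q] assms(3,4) conn_mono[of F "insert ek F" ends p q]
  by auto

lemma conn_insert_pendant_centre_iff:
  assumes F: "\<forall>h\<in>F. v \<notin> ends h" and ek: "ends ek = {v,k}" and "q \<noteq> v"
  shows "conn ends (insert ek F) v q \<longleftrightarrow> conn ends F k q"
proof
  assume "conn ends (insert ek F) v q"
  then show "conn ends F k q" using conn_insert_pendant[OF F ek, of v q] \<open>q \<noteq> v\<close> by simp
next
  assume "conn ends F k q"
  then have "conn ends (insert ek F) k q" by (rule conn_mono[rotated]) auto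
  moreover have "conn ends (insert ek F) v k" using ek by (auto intro: conn_edge)
  ultimately show "conn ends (insert ek F) v q" by (rule conn_trans[rotated])
qed

text \<open>Two parallel edges form a bispanning subgraph on their two ends.\<close>
lemma atomic_no_parallel_edges:
  assumes atom: "atomic V E ends" and "g1 \<in> E" "g2 \<in> E" "g3 \<in> E"
    and "g1 \<noteq> g2" "g3 \<noteq> g1" "g3 \<noteq> g2"
    and e: "ends g1 = {v,x}" "ends g2 = {v,x}" and "v \<noteq> x" "{v,x} \<subseteq> V"
  shows False
proof -
  have "spanning_tree {v,x} {g1,g2} ends {g}" if "g \<in> {g1,g2}" for g
    unfolding spanning_tree_def
  proof (intro conjI)
    have eg: "ends g = {v,x}" using that e by auto
    then have "conn ends {g} v x" by (auto intro: conn_edge)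
    then show "\<forall>p\<in>{v,x}. \<forall>q\<in>{v,x}. conn ends {g} p q" using conn_sym by auto
    show "\<not> (\<exists>C\<subseteq>{g}. is_cycle ends C)"
      by (rule acyclicI) (use eg \<open>v \<noteq> x\<close> in \<open>auto simp: doubleton_eq_iff dest: conn_empty\<close>)
  qed (use that in auto)
  then have "bispanning {v,x} {g1,g2} ends"
    unfolding bispanning_def using \<open>g1 \<noteq> g2\<close> by blast
  moreover have "subgraph {v,x} {g1,g2} V E ends" using assms by (auto simp: subgraph_def)
  ultimately have "({v,x} = V \<and> {g1,g2} = E) \<or> (\<exists>w. {v,x} = {w})"
    using atom[unfolded atomic_def, rule_format, of "{v,x}" "{g1,g2}"] by blast
  then show False using assms by (auto simp: doubleton_eq_iff)
qed

subsection \<open>Reducing a vertex of degree three\<close>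

locale degree3_reduction =
  fixes V :: "'v set" and E :: "'e set" and ends :: "'e \<Rightarrow> 'v set"
    and v a b c :: 'v and ea eb ec eab :: 'e
  assumes wf: "\<forall>h\<in>E. ends h \<subseteq> V \<and> card (ends h) = 2"
    and neighbours_in_V: "a \<in> V" "b \<in> V" "c \<in> V"
    and distinct: "v \<noteq> a" "v \<noteq> b" "v \<noteq> c" "a \<noteq> b" "a \<noteq> c" "b \<noteq> c"
    and ends_ea: "ends ea = {v,a}" and ends_eb: "ends eb = {v,b}" and ends_ec: "ends ec = {v,c}"
    and incident_in_E: "ea \<in> E" "eb \<in> E" "ec \<in> E"
    and avoid_v: "\<forall>h\<in>E - {ea,eb,ec}. v \<notin> ends h"
    and eab_new: "eab \<notin> E"
begin

text \<open>The reduction graph G_{a,b} is (V_ab, E_ab, ends_ab).\<close>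

abbreviation "E_rest \<equiv> E - {ea,eb,ec}"
abbreviation "V_ab \<equiv> V - {v}"
abbreviation "E_ab \<equiv> insert eab E_rest"
abbreviation "ends_ab \<equiv> ends(eab := {a,b})"

lemma incident_distinct: "ea \<noteq> eb" "ea \<noteq> ec" "eb \<noteq> ec" "ea \<noteq> eab" "eb \<noteq> eab" "ec \<noteq> eab"
  using ends_ea ends_eb ends_ec distinct incident_in_E eab_new by (auto simp: doubleton_eq_iff)

lemma rest_edge_ends: "h \<in> E_rest \<Longrightarrow> ends h = {p,q} \<Longrightarrow> p \<noteq> q \<and> p \<noteq> v \<and> q \<noteq> v"
  using wf avoid_v by (fastforce simp: card_2_iff doubleton_eq_iff)

lemma ends_ab_rest: "h \<in> E_rest \<Longrightarrow> ends_ab h = ends h"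
  using eab_new by auto

lemma rest_avoids_v: "F \<subseteq> E_rest \<Longrightarrow> \<forall>h\<in>F. v \<notin> ends h"
  using avoid_v by blast

lemma conn_ends_ab: "F \<subseteq> E_rest \<Longrightarrow> conn ends_ab F = conn ends F"
  using eab_new by (intro conn_fun_upd_notin) blast

lemma wf_ab: "\<forall>h\<in>E_ab. ends_ab h \<subseteq> V_ab \<and> card (ends_ab h) = 2"
  using wf avoid_v neighbours_in_V distinct by auto

lemma conn_contract_rest:
  assumes "F \<subseteq> E_rest" "p \<noteq> v" "q \<noteq> v"
  shows "conn ends (F \<union> {ea,eb}) p q \<longleftrightarrow> conn ends_ab (insert eab F) p q"
  using assms eab_new distinct by (intro conn_contract_iff[OF rest_avoids_v _ ends_ea ends_eb]) auto

lemma conn_pendant_rest: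
  assumes "F \<subseteq> E_rest" "ends ek = {v,k}" "p \<noteq> v" "q \<noteq> v"
  shows "conn ends (insert ek F) p q \<longleftrightarrow> conn ends F p q"
  using conn_insert_pendant_iff[OF rest_avoids_v[OF assms(1)] assms(2-4)] .

lemma conn_pendant_centre_rest:
  assumes "F \<subseteq> E_rest" "ends ek = {v,k}" "q \<noteq> v"
  shows "conn ends (insert ek F) v q \<longleftrightarrow> conn ends F k q"
  using conn_insert_pendant_centre_iff[OF rest_avoids_v[OF assms(1)] assms(2-3)] .

lemma rest_edgeE:
  assumes "h \<in> E_rest"
  obtains p q where "ends h = {p,q}" "ends_ab h = {p,q}" "p \<noteq> v" "q \<noteq> v" "p \<in> V_ab" "q \<in> V_ab"
proof -
  obtain p q where pq: "ends h = {p,q}" using wf assms by (force simp: card_2_iff)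
  have "p \<noteq> v" "q \<noteq> v" using rest_edge_ends[OF assms pq] by simp_all
  moreover have "p \<in> V" "q \<in> V" using wf assms pq by blast+
  moreover have "ends_ab h = {p,q}" using ends_ab_rest[OF assms] pq by simp
  ultimately show thesis using pq by (intro that[of p q]) simp_all
qed

end

locale degree3_reduction_trees = degree3_reduction +
  fixes S T
  assumes tau_vertex: "(S, T) \<in> tau_vertices (V - {v}) (insert eab (E - {ea,eb,ec})) (ends(eab := {a,b}))"
    and eab_in_S: "eab \<in> S"
begin

text \<open>(lift_S, lift_T) is rho eab ea eb ec (S, T).\<close>

abbreviation "lift_S \<equiv> S - {eab} \<union> {ea,eb}"
abbreviation "lift_T \<equiv> insert ec T"

lemma S_tree: "spanning_tree V_ab E_ab ends_ab S"
  and T_tree: "spanning_tree V_ab E_ab ends_ab T"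
  and disjoint: "S \<inter> T = {}" and cover: "S \<union> T = E_ab"
  using tau_vertex by (auto simp: tau_vertices_def)

lemma eab_notin_T: "eab \<notin> T"
  using disjoint eab_in_S by auto

lemma T_rest: "T \<subseteq> E_rest"
  using cover eab_notin_T T_tree by (auto simp: spanning_tree_def)

lemma S_rest: "S - {eab} \<subseteq> E_rest"
  using cover by auto

lemma S_eq: "S = insert eab (S - {eab})"
  using eab_in_S by auto

lemma S_no_path_ab: "\<not> conn ends (S - {eab}) a b"
  using spanning_tree_bridge[OF S_tree eab_in_S, of a b] distinct conn_ends_ab[OF S_rest] by simp

lemma lift_S_conn: "p \<in> V \<Longrightarrow> conn ends lift_S a p"
proof (cases "p = v")
  case True
  have "conn ends lift_S v a" by (rule conn_edge[of ea]) (auto simp: ends_ea)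
  then show ?thesis using conn_sym True by simp
next
  case False
  assume "p \<in> V"
  then have "conn ends_ab S a p" using S_tree neighbours_in_V distinct False by (auto simp: spanning_tree_def)
  then show ?thesis using conn_contract_rest[OF S_rest, of a p] False distinct S_eq by simp
qed

lemma lift_S_bridge:
  assumes g: "g \<in> lift_S" "ends g = {p,q}"
  shows "\<not> conn ends (lift_S - {g}) p q"
proof -
  consider "g = ea" | "g = eb" | "g \<in> S - {eab}" using g by auto
  then show ?thesis
  proof cases
    case 1
    then have "lift_S - {g} = insert eb (S - {eab})" using incident_distinct S_rest by auto
    moreover have "\<not> conn ends (insert eb (S - {eab})) v a"
      using conn_pendant_centre_rest[OF S_rest ends_eb] S_no_path_ab distinct by (metis conn_sym)
    moreover have "{p,q} = {v,a}" using g 1 ends_ea by simp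
    ultimately show ?thesis using conn_doubleton_iff by metis
  next
    case 2
    then have "lift_S - {g} = insert ea (S - {eab})" using incident_distinct S_rest by auto
    moreover have "\<not> conn ends (insert ea (S - {eab})) v b"
      using conn_pendant_centre_rest[OF S_rest ends_ea] S_no_path_ab distinct by auto
    moreover have "{p,q} = {v,b}" using g 2 ends_eb by simp
    ultimately show ?thesis using conn_doubleton_iff by metis
  next
    case 3
    then have pq: "p \<noteq> q" "p \<noteq> v" "q \<noteq> v" using rest_edge_ends S_rest g(2) by blast+
    have "\<not> conn ends_ab (S - {g}) p q"
      using spanning_tree_bridge[OF S_tree, of g p q] 3 g pq S_rest by auto
    moreover have "S - {g} = insert eab (S - {eab} - {g})" "lift_S - {g} = (S - {eab} - {g}) \<union> {ea,eb}"
      using 3 incident_distinct S_rest eab_in_S by auto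
    ultimately show ?thesis using conn_contract_rest[of "S - {eab} - {g}" p q] S_rest pq by auto
  qed
qed

lemma lift_S_spanning: "spanning_tree V E ends lift_S"
proof (rule spanning_treeI[OF _ _ lift_S_conn lift_S_bridge])
  show "lift_S \<subseteq> E" using S_rest incident_in_E by auto
  then show "\<forall>h\<in>lift_S. card (ends h) = 2" using wf by auto
qed

lemma lift_T_conn: "p \<in> V \<Longrightarrow> conn ends lift_T c p"
proof (cases "p = v")
  case True
  have "conn ends lift_T v c" by (rule conn_edge[of ec]) (auto simp: ends_ec)
  then show ?thesis using conn_sym True by simp
next
  case False
  assume "p \<in> V"
  then have "conn ends_ab T c p" using T_tree neighbours_in_V distinct False by (auto simp: spanning_tree_def)
  then show ?thesis
    using conn_pendant_rest[OF T_rest ends_ec, of c p] conn_ends_ab[OF T_rest] False distinct by simp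
qed

lemma lift_T_bridge:
  assumes g: "g \<in> lift_T" "ends g = {p,q}"
  shows "\<not> conn ends (lift_T - {g}) p q"
proof (cases "g = ec")
  case True
  then have "lift_T - {g} = T" using T_rest by auto
  moreover have "\<not> conn ends T v c" using conn_from_isolated[OF rest_avoids_v[OF T_rest], of c] distinct(3) by blast
  moreover have "{p,q} = {v,c}" using g True ends_ec by simp
  ultimately show ?thesis using conn_doubleton_iff by metis
next
  case False
  then have "g \<in> T" using g by auto
  then have pq: "p \<noteq> q" "p \<noteq> v" "q \<noteq> v" using rest_edge_ends T_rest g(2) by blast+
  have "g \<noteq> eab" using \<open>g \<in> T\<close> eab_notin_T by blast
  then have "\<not> conn ends_ab (T - {g}) p q"
    using spanning_tree_bridge[OF T_tree \<open>g \<in> T\<close>, of p q] g(2) pq(1) by simp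
  moreover have "T - {g} \<subseteq> E_rest" using T_rest by blast
  moreover have "lift_T - {g} = insert ec (T - {g})" using False by blast
  ultimately show ?thesis using conn_ends_ab conn_pendant_rest[OF _ ends_ec pq(2,3)] by metis
qed

lemma lift_T_spanning: "spanning_tree V E ends lift_T"
proof (rule spanning_treeI[OF _ _ lift_T_conn lift_T_bridge])
  show "lift_T \<subseteq> E" using T_rest incident_in_E by auto
  then show "\<forall>h\<in>lift_T. card (ends h) = 2" using wf by auto
qed

lemma lift_tau_vertex: "(lift_S, lift_T) \<in> tau_vertices V E ends"
proof -
  have "lift_S \<inter> lift_T = {}" using disjoint S_rest T_rest incident_distinct by auto
  have "S - {eab} \<union> T = E_rest" using cover eab_notin_T eab_new by auto
  then have "lift_S \<union> lift_T = E" using incident_in_E by auto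
  then show ?thesis using \<open>lift_S \<inter> lift_T = {}\<close> lift_S_spanning lift_T_spanning
    by (simp only: tau_vertices_def mem_Collect_eq prod.case)
qed

lemma disconnects_lift_S:
  assumes g: "g \<in> S - {eab}" and h: "h \<in> E_rest"
  shows "disconnects ends lift_S g h \<longleftrightarrow> disconnects ends_ab S g h"
proof -
  obtain p q where pq: "ends h = {p,q}" "ends_ab h = {p,q}" "p \<noteq> v" "q \<noteq> v" using rest_edgeE[OF h] .
  have "S - {eab} - {g} \<subseteq> E_rest" using S_rest by blast
  note contract = conn_contract_rest[OF this pq(3,4)]
  have "lift_S - {g} = (S - {eab} - {g}) \<union> {ea,eb}" "S - {g} = insert eab (S - {eab} - {g})"
    using g incident_distinct S_rest eab_in_S by auto
  then show ?thesis using disconnects_iff[of ends h p q, OF pq(1)] disconnects_iff[of ends_ab h p q, OF pq(2)] contract by simp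
qed

lemma disconnects_lift_S_incident:
  assumes "ek \<in> {ea,eb}" "ek' \<in> {ea,eb}" "ek \<noteq> ek'" and h: "h \<in> E_rest"
  shows "disconnects ends lift_S ek h \<longleftrightarrow> disconnects ends_ab S eab h"
proof -
  obtain p q where pq: "ends h = {p,q}" "ends_ab h = {p,q}" "p \<noteq> v" "q \<noteq> v" using rest_edgeE[OF h] .
  obtain k where "ends ek' = {v,k}" using assms(2) ends_ea ends_eb by blast
  note pendant = conn_pendant_rest[OF S_rest this pq(3,4)]
  have "lift_S - {ek} = insert ek' (S - {eab})" using assms incident_distinct S_rest by auto
  then show ?thesis
    using disconnects_iff[of ends h p q, OF pq(1)] disconnects_iff[of ends_ab h p q, OF pq(2)] pendant conn_ends_ab[OF S_rest] by simp
qed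

lemma disconnects_lift_T:
  assumes g: "g \<in> T" and h: "h \<in> E_rest"
  shows "disconnects ends lift_T g h \<longleftrightarrow> disconnects ends_ab T g h"
proof -
  obtain p q where pq: "ends h = {p,q}" "ends_ab h = {p,q}" "p \<noteq> v" "q \<noteq> v" using rest_edgeE[OF h] .
  have "T - {g} \<subseteq> E_rest" using T_rest by blast
  note pendant = conn_pendant_rest[OF this ends_ec pq(3,4)] conn_ends_ab[OF this]
  have "lift_T - {g} = insert ec (T - {g})" using g T_rest by auto
  then show ?thesis using disconnects_iff[of ends h p q, OF pq(1)] disconnects_iff[of ends_ab h p q, OF pq(2)] pendant by simp
qed

lemma not_disconnects_lift_T_ec:
  assumes h: "h \<in> E_rest"
  shows "\<not> disconnects ends lift_T ec h"
proof -
  obtain p q where pq: "ends h = {p,q}" "p \<in> V_ab" "q \<in> V_ab" by (rule rest_edgeE[OF h])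
  then have "conn ends_ab T p q" using T_tree by (simp add: spanning_tree_def)
  moreover have "lift_T - {ec} = T" using T_rest by auto
  ultimately show ?thesis using disconnects_iff[of ends h p q, OF pq(1)] conn_ends_ab[OF T_rest] by simp
qed

lemma disconnects_lift_T_incident:
  assumes "g \<in> T" "ends ek = {v,k}" "k \<noteq> v"
  shows "disconnects ends lift_T g ek \<longleftrightarrow> \<not> conn ends (T - {g}) c k"
proof -
  have "T - {g} \<subseteq> E_rest" using T_rest by blast
  note centre = conn_pendant_centre_rest[OF this ends_ec \<open>k \<noteq> v\<close>]
  have "lift_T - {g} = insert ec (T - {g})" using assms(1) T_rest by auto
  then show ?thesis using disconnects_iff[of ends ek v k, OF assms(2)] centre by simp
qed

lemma disconnects_eab:
  "disconnects ends_ab T g eab \<longleftrightarrow> \<not> conn ends (T - {g}) a b"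
proof -
  have "T - {g} \<subseteq> E_rest" using T_rest by blast
  then show ?thesis using disconnects_iff[of ends_ab eab a b T g] conn_ends_ab by simp
qed

lemma fcycle_lift_T:
  "ek \<in> {ea,eb} \<Longrightarrow> fcycle ends lift_T ek = insert ek {g\<in>lift_T. disconnects ends lift_T g ek}"
  using incident_in_E incident_distinct T_rest by (intro fcycle_eq[OF lift_T_spanning wf]) auto

lemma arc_lift_iff_S_edge:
  assumes e: "e \<in> S - {eab}" and f: "f \<in> E_rest"
  shows "tau3_arc V E ends e f lift_S lift_T \<longleftrightarrow> tau3_arc V_ab E_ab ends_ab e f S T"
proof -
  have "e \<in> E_rest" "e \<notin> T" using e S_rest disjoint by auto
  have "g \<in> lift_T \<and> disconnects ends lift_S e g \<and> disconnects ends lift_T g e \<longleftrightarrow>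
      g \<in> T \<and> disconnects ends_ab S e g \<and> disconnects ends_ab T g e" for g
  proof (cases "g \<in> T")
    case True
    then show ?thesis
      using T_rest disconnects_lift_S[OF e] disconnects_lift_T[OF True \<open>e \<in> E_rest\<close>] by auto
  qed (use not_disconnects_lift_T_ec[OF \<open>e \<in> E_rest\<close>] in auto)
  then have "{g\<in>lift_T. disconnects ends lift_S e g \<and> disconnects ends lift_T g e} =
      {g\<in>T. disconnects ends_ab S e g \<and> disconnects ends_ab T g e}" by blast
  moreover have "f \<in> lift_T \<longleftrightarrow> f \<in> T" using f by auto
  moreover have "e \<in> lift_S" "e \<notin> lift_T" "e \<in> S" using e \<open>e \<notin> T\<close> \<open>e \<in> E_rest\<close> by auto
  ultimately show ?thesis
    unfolding tau3_arc_iff[OF lift_tau_vertex wf] tau3_arc_iff[OF tau_vertex wf_ab]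
    using \<open>e \<notin> T\<close> by blast
qed

lemma arc_lift_iff_T_edge:
  assumes e: "e \<in> T" and f: "f \<in> E_rest"
  shows "tau3_arc V E ends e f lift_S lift_T \<longleftrightarrow> tau3_arc V_ab E_ab ends_ab e f S T \<and>
    \<not> (disconnects ends_ab S eab e \<and> \<not> conn ends (T - {e}) c a \<and> \<not> conn ends (T - {e}) c b)"
proof -
  have "e \<in> E_rest" "e \<notin> S" using e T_rest disjoint by auto
  then have "e \<in> lift_T" "e \<notin> lift_S" using e by auto
  define P where "P g \<longleftrightarrow> disconnects ends_ab T e g \<and> disconnects ends_ab S g e" for g
  define Q where "Q g \<longleftrightarrow> disconnects ends lift_T e g \<and> disconnects ends lift_S g e" for g
  define Z where "Z \<longleftrightarrow> disconnects ends_ab S eab e"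
  let ?c = "conn ends (T - {e})"
  have arc_G: "tau3_arc V E ends e f lift_S lift_T \<longleftrightarrow> f \<in> lift_S \<and> {g\<in>lift_S. Q g} = {f}"
    unfolding tau3_arc_iff[OF lift_tau_vertex wf] Q_def using \<open>e \<in> lift_T\<close> \<open>e \<notin> lift_S\<close> by blast
  have arc_Gab: "tau3_arc V_ab E_ab ends_ab e f S T \<longleftrightarrow> f \<in> S \<and> {g\<in>S. P g} = {f}"
    unfolding tau3_arc_iff[OF tau_vertex wf_ab] P_def using e \<open>e \<notin> S\<close> by blast
  have "Q g \<longleftrightarrow> P g" if "g \<in> S - {eab}" for g
    using that S_rest disconnects_lift_T[OF e] disconnects_lift_S[OF that \<open>e \<in> E_rest\<close>]
    by (auto simp: P_def Q_def)
  then have split_G: "{g\<in>lift_S. Q g} = {g\<in>S - {eab}. P g} \<union> {g\<in>{ea,eb}. Q g}" by auto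
  have split_Gab: "{g\<in>S. P g} = {g\<in>S - {eab}. P g} \<union> {g\<in>{eab}. P g}" using eab_in_S by auto
  have "f \<noteq> ea" "f \<noteq> eb" "f \<noteq> eab" using f eab_new by auto
  then have arcs: "tau3_arc V E ends e f lift_S lift_T \<longleftrightarrow> {g\<in>S - {eab}. P g} = {f} \<and> \<not> Q ea \<and> \<not> Q eb"
    "tau3_arc V_ab E_ab ends_ab e f S T \<longleftrightarrow> {g\<in>S - {eab}. P g} = {f} \<and> \<not> P eab"
    unfolding arc_G arc_Gab split_G split_Gab Un_singleton_iff by auto
  have "Q ea \<longleftrightarrow> Z \<and> \<not> ?c c a" "Q eb \<longleftrightarrow> Z \<and> \<not> ?c c b"
    using disconnects_lift_T_incident[OF e] disconnects_lift_S_incident[OF _ _ _ \<open>e \<in> E_rest\<close>]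
      ends_ea ends_eb distinct incident_distinct by (auto simp: Q_def Z_def)
  moreover have "P eab \<longleftrightarrow> \<not> ?c a b \<and> Z" by (simp add: P_def Z_def disconnects_eab)
  moreover have "?c c a \<Longrightarrow> ?c c b \<Longrightarrow> ?c a b" "?c a b \<Longrightarrow> ?c c a \<Longrightarrow> ?c c b"
    "?c a b \<Longrightarrow> ?c c b \<Longrightarrow> ?c c a" by (meson conn_sym conn_trans)+
  ultimately show ?thesis unfolding arcs Z_def by blast
qed

lemma lifted_cut_cycle_T_edge:
  assumes "e \<in> T"
  shows "e \<in> fcut E_ab ends_ab S eab \<inter> fcycle ends lift_T ea \<inter> fcycle ends lift_T eb \<longleftrightarrow>
    disconnects ends_ab S eab e \<and> \<not> conn ends (T - {e}) c a \<and> \<not> conn ends (T - {e}) c b"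
proof -
  have "e \<in> E_rest" using assms T_rest by auto
  then have "e \<in> fcut E_ab ends_ab S eab \<longleftrightarrow> disconnects ends_ab S eab e"
    using fcut_iff_disconnects[OF S_tree wf_ab eab_in_S, of e] by blast
  moreover have "e \<in> fcycle ends lift_T ek \<longleftrightarrow> \<not> conn ends (T - {e}) c k"
    if "ek \<in> {ea,eb}" "ends ek = {v,k}" "k \<noteq> v" for ek k
  proof -
    have "e \<noteq> ek" using that(1) \<open>e \<in> E_rest\<close> by auto
    then have "e \<in> fcycle ends lift_T ek \<longleftrightarrow> disconnects ends lift_T e ek"
      using fcycle_lift_T[OF that(1)] assms by blast
    then show ?thesis using disconnects_lift_T_incident[OF assms that(2,3)] by blast
  qed
  ultimately show ?thesis using ends_ea ends_eb distinct by blast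
qed

lemma arc_lift_iff:
  assumes "e \<in> E_rest" "f \<in> E_rest"
  shows "tau3_arc V E ends e f lift_S lift_T \<longleftrightarrow> tau3_arc V_ab E_ab ends_ab e f S T \<and>
    e \<notin> fcut E_ab ends_ab S eab \<inter> fcycle ends lift_T ea \<inter> fcycle ends lift_T eb"
proof (cases "e \<in> T")
  case True
  then show ?thesis using arc_lift_iff_T_edge[OF True assms(2)] lifted_cut_cycle_T_edge[OF True] by simp
next
  case False
  then have "e \<in> S - {eab}" using assms(1) cover eab_new by blast
  have "e \<notin> lift_T" "e \<noteq> ea" using False assms(1) by auto
  then have "e \<notin> fcycle ends lift_T ea" using fcycle_lift_T[of ea] by blast
  then show ?thesis using arc_lift_iff_S_edge[OF \<open>e \<in> S - {eab}\<close> assms(2)] by blast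
qed

end

lemma (in degree3_reduction) arc_rho_iff:
  assumes tv: "(S, T) \<in> tau_vertices V_ab E_ab ends_ab" and "e \<in> E_rest" "f \<in> E_rest"
  shows "(case rho eab ea eb ec (S, T) of (S', T') \<Rightarrow> tau3_arc V E ends e f S' T') \<longleftrightarrow>
    tau3_arc V_ab E_ab ends_ab e f S T \<and>
    ((eab \<in> S \<and> e \<notin> fcut E_ab ends_ab S eab \<inter> fcycle ends (insert ec T) ea \<inter> fcycle ends (insert ec T) eb) \<or>
     (eab \<in> T \<and> e \<notin> fcut E_ab ends_ab T eab \<inter> fcycle ends (insert ec S) ea \<inter> fcycle ends (insert ec S) eb))"
proof (cases "eab \<in> S")
  case True
  interpret degree3_reduction_trees V E ends v a b c ea eb ec eab S T
    using degree3_reduction_axioms tv True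
    by (simp add: degree3_reduction_trees_def degree3_reduction_trees_axioms_def)
  show ?thesis using arc_lift_iff[OF assms(2,3)] True eab_notin_T by (simp add: rho_def)
next
  case False
  have tv': "(T, S) \<in> tau_vertices V_ab E_ab ends_ab" using tv by (auto simp: tau_vertices_def)
  moreover have "eab \<in> T" using tv False by (auto simp: tau_vertices_def)
  ultimately interpret degree3_reduction_trees V E ends v a b c ea eb ec eab T S
    using degree3_reduction_axioms
    by (simp add: degree3_reduction_trees_def degree3_reduction_trees_axioms_def)
  show ?thesis
    using arc_lift_iff[OF assms(2,3)] False \<open>eab \<in> T\<close> tau3_arc_swap[of V E ends e f]
      tau3_arc_swap[of V_ab E_ab ends_ab e f]
    by (simp add: rho_def)
qed

lemma degree3_reduction_of_atomic:
  assumes G: "graph V E ends" and atom: "atomic V E ends" and "v \<in> V"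
    and ends: "ends ex = {v, x}" "ends ey = {v, y}" "ends ez = {v, z}"
    and inE: "ex \<in> E" "ey \<in> E" "ez \<in> E"
    and dist: "ex \<noteq> ey" "ex \<noteq> ez" "ey \<noteq> ez"
    and inc: "{g\<in>E. v \<in> ends g} = {ex, ey, ez}"
    and choice: "(a, b, c, ea, eb, ec) \<in> {(x, y, z, ex, ey, ez), (x, z, y, ex, ez, ey), (y, z, x, ey, ez, ex)}"
    and "eab \<notin> E"
  shows "degree3_reduction V E ends v a b c ea eb ec eab" and "{ex, ey, ez} = {ea, eb, ec}"
proof -
  have wf: "\<forall>h\<in>E. ends h \<subseteq> V \<and> card (ends h) = 2" using G by (simp add: graph_def)
  then have "v \<noteq> x" "v \<noteq> y" "v \<noteq> z" "x \<in> V" "y \<in> V" "z \<in> V" using inE ends by auto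
  moreover have "x \<noteq> y"
    by (rule notI, rule atomic_no_parallel_edges[OF atom inE(1,2,3) dist(1) dist(2)[symmetric] dist(3)[symmetric], where v = v and x = x])
      (use ends calculation \<open>v \<in> V\<close> in auto)
  moreover have "x \<noteq> z"
    by (rule notI, rule atomic_no_parallel_edges[OF atom inE(1,3,2) dist(2) dist(1)[symmetric] dist(3), where v = v and x = x])
      (use ends calculation \<open>v \<in> V\<close> in auto)
  moreover have "y \<noteq> z"
    by (rule notI, rule atomic_no_parallel_edges[OF atom inE(2,3,1) dist(3) dist(1) dist(2), where v = v and x = y])
      (use ends calculation \<open>v \<in> V\<close> in auto)
  moreover have "\<forall>h\<in>E - {ex,ey,ez}. v \<notin> ends h" using inc by blast
  ultimately show "degree3_reduction V E ends v a b c ea eb ec eab" "{ex, ey, ez} = {ea, eb, ec}"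
    using choice wf ends inE \<open>eab \<notin> E\<close> unfolding degree3_reduction_def by (auto simp: insert_commute)
qed

theorem mainTheorem14:
  fixes V :: "'v set" and E :: "'e set" and ends :: "'e \<Rightarrow> 'v set"
    and v x y z a b c :: 'v and ex ey ez ea eb ec eab :: 'e
  assumes G: "graph V E ends" and bisp: "bispanning V E ends" and atom: "atomic V E ends"
    and vV: "v \<in> V"
    and ends_ex: "ends ex = {v, x}" and ends_ey: "ends ey = {v, y}" and ends_ez: "ends ez = {v, z}"
    and exE: "ex \<in> E" and eyE: "ey \<in> E" and ezE: "ez \<in> E"
    and dist: "ex \<noteq> ey" "ex \<noteq> ez" "ey \<noteq> ez"
    and inc: "{g\<in>E. v \<in> ends g} = {ex, ey, ez}"
    and choice: "(a, b, c, ea, eb, ec) \<in> {(x, y, z, ex, ey, ez), (x, z, y, ex, ez, ey), (y, z, x, ey, ez, ex)}"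
    and new: "eab \<notin> E"
  defines "V' \<equiv> V - {v}"
    and "E' \<equiv> insert eab (E - {ex, ey, ez})"
    and "ends' \<equiv> ends(eab := {a, b})"
    and "cond1 \<equiv> (\<lambda>e S T. eab \<in> S \<and>
           e \<notin> fcut (insert eab (E - {ex, ey, ez})) (ends(eab := {a, b})) S eab \<inter> fcycle ends (insert ec T) ea \<inter> fcycle ends (insert ec T) eb)"
    and "cond2 \<equiv> (\<lambda>e S T. eab \<in> T \<and>
           e \<notin> fcut (insert eab (E - {ex, ey, ez})) (ends(eab := {a, b})) T eab \<inter> fcycle ends (insert ec S) ea \<inter> fcycle ends (insert ec S) eb)"
  shows "(\<forall>e f S T. tau3_arc V' E' ends' e f S T \<and> e \<noteq> eab \<and> f \<noteq> eab \<and>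
             (cond1 e S T \<or> cond2 e S T) \<longrightarrow>
             (case rho eab ea eb ec (S, T) of (S2, T2) \<Rightarrow> tau3_arc V E ends e f S2 T2))
       \<and> (\<forall>(S, T)\<in>tau_vertices V' E' ends'. \<forall>e\<in>E' - {eab}. \<forall>f\<in>E' - {eab}.
             (\<not> tau3_arc V' E' ends' e f S T \<or>
              (tau3_arc V' E' ends' e f S T \<and> \<not> cond1 e S T \<and> \<not> cond2 e S T)) \<longrightarrow>
             (case rho eab ea eb ec (S, T) of (S2, T2) \<Rightarrow> \<not> tau3_arc V E ends e f S2 T2))"
proof -
  have red: "degree3_reduction V E ends v a b c ea eb ec eab" and Eeq: "{ex, ey, ez} = {ea, eb, ec}"
    using degree3_reduction_of_atomic[OF G atom vV ends_ex ends_ey ends_ez exE eyE ezE dist inc choice new]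
    by blast+
  have key: "(case rho eab ea eb ec (S, T) of (S2, T2) \<Rightarrow> tau3_arc V E ends e f S2 T2) \<longleftrightarrow>
      tau3_arc V' E' ends' e f S T \<and> (cond1 e S T \<or> cond2 e S T)"
    if "(S, T) \<in> tau_vertices V' E' ends'" "e \<in> E' - {eab}" "f \<in> E' - {eab}" for e f S T
    using degree3_reduction.arc_rho_iff[OF red, of S T e f] that
    unfolding V'_def E'_def ends'_def cond1_def cond2_def Eeq by simp
  show ?thesis
  proof (intro conjI allI impI ballI)
    fix e f S T
    assume arc: "tau3_arc V' E' ends' e f S T \<and> e \<noteq> eab \<and> f \<noteq> eab \<and> (cond1 e S T \<or> cond2 e S T)"
    then have "(S, T) \<in> tau_vertices V' E' ends'" "e \<in> E' - {eab}" "f \<in> E' - {eab}"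
      by (auto simp: tau3_arc_def tau_vertices_def)
    then show "case rho eab ea eb ec (S, T) of (S2, T2) \<Rightarrow> tau3_arc V E ends e f S2 T2"
      using key arc by simp
  next
    fix P assume "P \<in> tau_vertices V' E' ends'"
    then show "case P of (S, T) \<Rightarrow> \<forall>e\<in>E' - {eab}. \<forall>f\<in>E' - {eab}.
        (\<not> tau3_arc V' E' ends' e f S T \<or> (tau3_arc V' E' ends' e f S T \<and> \<not> cond1 e S T \<and> \<not> cond2 e S T)) \<longrightarrow>
        (case rho eab ea eb ec (S, T) of (S2, T2) \<Rightarrow> \<not> tau3_arc V E ends e f S2 T2)"
      using key[of "fst P" "snd P"] by (cases P) (simp add: case_prod_beta)
  qed
qed

end
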